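(* Let $r\geq1$, let $\mathbf a=(a_1,\ldots,a_r)$ be positive integers, let $D$ be a positive common multiple of $a_1,\ldots,a_r$, and let $j\geq 1$ be an integer dividing $a_i$ for some $1\leq i\leq r$; put $\rho_j=e^{2\pi i/j}$. Then for all $n\ge 0$, $$ W_{j}(n,\mathbf a) = \frac{\rho_j^{-n}}{D(r-1)!} \sum_{m=1}^r \sum_{\ell=1}^{j} \rho_j^{\ell} \sum_{k=m-1}^{r-1} s(r,k)\, (-1)^{k-m+1} \binom{k}{m-1} \sum_{\substack{0\leq j_1\leq \frac{D}{a_1}-1,\ldots, 0\leq j_r\leq \frac{D}{a_r}-1 \\ a_1j_1+\cdots+a_rj_r \equiv \ell \pmod j}} D^{-k} (a_1j_1+\cdots+a_rj_r)^{k-m+1}\, n^{m-1}.$$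
   Context: $p_{\mathbf a}(n)$ is the number of integer solutions $(x_1,\ldots,x_r)$ of $a_1x_1+\cdots+a_rx_r=n$ with all $x_i\geq 0$. There are unique polynomials $P_\lambda$, indexed by the $D$-th roots of unity $\lambda$, with $p_{\mathbf a}(n)=\sum_{\lambda^D=1}P_\lambda(n)\lambda^{-n}$ for all $n\geq 0$; the Sylvester wave is $W_j(n,\mathbf a)=P_{\rho_j}(n)\rho_j^{-n}$. Here $s(r,k)$ denotes the coefficient of $x^k$ in $(x+1)(x+2)\cdots(x+r-1)$ (i.e. the unsigned Stirling number of the first kind $\left[{r\atop k+1}\right]$), the inner sum is over integer tuples, and $0^0=1$. *)

theory Defs
  imports Complex_Main "HOL-Computational_Algebra.Polynomial"
begin

text \<open>The weight vector a = (a_1,...,a_r) is a list (0-indexed), r = length a.\<close>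

definition restricted_partition :: "nat list \<Rightarrow> nat \<Rightarrow> nat" where
  "restricted_partition a n =
     card {x :: nat list. length x = length a \<and> (\<Sum>i<length a. a ! i * x ! i) = n}"

text \<open>By convention P_z = 0 for z not a D-th root of unity (makes the family unique).\<close>

definition sylvester_polys :: "nat list \<Rightarrow> nat \<Rightarrow> complex \<Rightarrow> complex poly" where
  "sylvester_polys a D = (THE P. (\<forall>z. z ^ D \<noteq> 1 \<longrightarrow> P z = 0) \<and>
      (\<forall>n. of_nat (restricted_partition a n) =
           (\<Sum>z\<in>{z::complex. z ^ D = 1}. poly (P z) (of_nat n) * inverse z ^ n)))"

definition rho :: "nat \<Rightarrow> complex" where
  "rho j = exp (2 * of_real pi * \<i> / of_nat j)"

definition sylvester_wave :: "nat list \<Rightarrow> nat \<Rightarrow> nat \<Rightarrow> nat \<Rightarrow> complex" where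
  "sylvester_wave a D j n = poly (sylvester_polys a D (rho j)) (of_nat n) * inverse (rho j) ^ n"

definition stirl :: "nat \<Rightarrow> nat \<Rightarrow> int" where
  "stirl r k = coeff (\<Prod>i\<in>{1..<r}. [:int i, 1:]) k"

definition wave_tuples :: "nat list \<Rightarrow> nat \<Rightarrow> nat \<Rightarrow> nat \<Rightarrow> nat list set" where
  "wave_tuples a D j l = {js. length js = length a \<and> (\<forall>i<length a. js ! i < D div a ! i) \<and>
      (\<Sum>i<length a. a ! i * js ! i) mod j = l mod j}"

end

theory Submission
  imports Defs
begin

text \<open>
  Write a solution x of a_1 x_1 + ... + a_r x_r = n as x_i = t_i + (D/a_i) q_i with
  0 \<le> t_i < D/a_i. Then the weighted sum of x is s(t) + D (q_1 + ... + q_r), where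
  s(t) = a_1 t_1 + ... + a_r t_r < r D, so p_a(n) is a sum, over these residue tuples t, of the
  number of compositions of (n - s(t)) / D into r parts. When D divides n - s(t) this binomial
  coefficient is the value at y = (n - s(t)) / D of (y + 1) (y + 2) ... (y + r - 1) / (r - 1)!;
  if moreover n < s(t), then y is one of -1, ..., -(r - 1) and both sides vanish. The
  divisibility condition is detected by the average of \<zeta>^(s(t) - n) over the D-th roots of
  unity \<zeta>, which exhibits p_a(n) as the sum of P_\<zeta>(n) \<zeta>^(-n) with explicit polynomials P_\<zeta>.
  These are the Sylvester polynomials because such a representation is unique. Expanding the
  rising factorial in the numbers s(r,k) and grouping the tuples t by s(t) mod j gives the formula.
\<close>

section \<open>Sums over roots of unity\<close>

lemma power_eq_power_mod:
  fixes z :: "'a::monoid_mult"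
  assumes "z ^ j = 1"
  shows "z ^ k = z ^ (k mod j)"
proof -
  have "z ^ k = z ^ (j * (k div j) + k mod j)" by simp
  also have "\<dots> = (z ^ j) ^ (k div j) * z ^ (k mod j)" by (simp only: power_add power_mult)
  finally show ?thesis using assms by simp
qed

lemma power_sum_roots_of_unity:
  assumes "D > 0"
  shows "(\<Sum>z | z ^ D = 1. z ^ k :: complex) = (if D dvd k then of_nat D else 0)"
proof -
  define \<omega> where "\<omega> = cis (2 * pi / real D)"
  have \<omega>_pow: "\<omega> ^ k = cis (2 * pi * real k / real D)" for k
    by (simp add: \<omega>_def DeMoivre mult_ac)
  have "(\<Sum>z | z ^ D = 1. z ^ k :: complex) = (\<Sum>t<D. cis (2 * pi * real t / real D) ^ k)"
    using assms by (intro sum.reindex_bij_betw [symmetric] bij_betw_roots_unity) auto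
  also have "\<dots> = (\<Sum>t<D. (\<omega> ^ k) ^ t)"
    by (intro sum.cong refl) (simp add: \<omega>_pow DeMoivre mult_ac)
  finally have sum_eq: "(\<Sum>z | z ^ D = 1. z ^ k :: complex) = (\<Sum>t<D. (\<omega> ^ k) ^ t)" .
  have root_iff: "\<omega> ^ k = 1 \<longleftrightarrow> D dvd k"
  proof
    assume "\<omega> ^ k = 1"
    then obtain m :: int where "2 * pi * real k / real D = 2 * pi * of_int m"
      by (auto simp: \<omega>_pow complex_eq_iff cos_one_2pi_int)
    hence "real_of_int (int k) = real_of_int (int D * m)" using assms by (simp add: field_simps)
    hence "int k = int D * m" by (simp only: of_int_eq_iff)
    thus "D dvd k" by (metis dvd_triv_left int_dvd_int_iff)
  next
    assume "D dvd k"
    then obtain m where "k = D * m" by blast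
    hence "2 * pi * real k / real D = 2 * pi * real m" using assms by simp
    hence "\<omega> ^ k = cis (2 * pi * real m)" by (simp only: \<omega>_pow)
    also have "\<dots> = 1" by (rule cis_multiple_2pi) simp
    finally show "\<omega> ^ k = 1" .
  qed
  have "(\<omega> ^ k) ^ D = 1"
  proof -
    have "(\<omega> ^ k) ^ D = cis (2 * pi * real k)" using assms by (simp add: \<omega>_pow DeMoivre)
    also have "\<dots> = 1" by (rule cis_multiple_2pi) simp
    finally show ?thesis .
  qed
  show ?thesis
  proof (cases "D dvd k")
    case True
    hence "\<omega> ^ k = 1" using root_iff by simp
    thus ?thesis unfolding sum_eq using True by simp
  next
    case False
    hence "\<omega> ^ k \<noteq> 1" using root_iff by simp
    thus ?thesis using False sum_eq \<open>(\<omega> ^ k) ^ D = 1\<close> by (simp add: geometric_sum)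
  qed
qed

lemma sum_roots_of_unity_power_inverse_power:
  assumes "D > 0"
  shows "(\<Sum>z | z ^ D = 1. z ^ s * inverse z ^ n :: complex) = (if s mod D = n mod D then of_nat D else 0)"
proof -
  have "z ^ s * inverse z ^ n = z ^ (s + (D - 1) * n)" if "z ^ D = 1" for z :: complex
  proof -
    have "z * z ^ (D - 1) = 1" using that assms by (cases D) simp_all
    hence "inverse z = z ^ (D - 1)" by (rule inverse_unique)
    thus ?thesis by (simp add: power_add power_mult)
  qed
  hence "(\<Sum>z | z ^ D = 1. z ^ s * inverse z ^ n :: complex) = (\<Sum>z | z ^ D = 1. z ^ (s + (D - 1) * n))"
    by (intro sum.cong) auto
  also have "\<dots> = (if D dvd s + (D - 1) * n then of_nat D else 0)"
    using assms by (rule power_sum_roots_of_unity)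
  also have "D dvd s + (D - 1) * n \<longleftrightarrow> s mod D = n mod D"
  proof -
    have "n \<le> s + D * n" using assms by (cases D) auto
    hence "(s + D * n) mod D = n mod D \<longleftrightarrow> D dvd (s + D * n) - n" by (rule mod_eq_dvd_iff_nat)
    moreover have "(s + D * n) - n = s + (D - 1) * n" using assms by (cases D) auto
    ultimately show ?thesis by auto
  qed
  finally show ?thesis .
qed

lemma sum_power_root_of_unity_by_residue:
  fixes z :: "'a::comm_semiring_1"
  assumes "j \<ge> 1" and "z ^ j = 1" and "finite T"
  shows "(\<Sum>x\<in>T. z ^ h x * f x) = (\<Sum>l=1..j. z ^ l * (\<Sum>x | x \<in> T \<and> h x mod j = l mod j. f x))"
proof -
  define G where "G r = (\<Sum>x | x \<in> T \<and> h x mod j = r. z ^ h x * f x)" for r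
  have "(\<Sum>l=1..j. z ^ l * (\<Sum>x | x \<in> T \<and> h x mod j = l mod j. f x)) = (\<Sum>l=1..j. G (l mod j))"
  proof (intro sum.cong refl)
    fix l
    have "z ^ h x = z ^ l" if "h x mod j = l mod j" for x
      using power_eq_power_mod[OF assms(2), of "h x"] power_eq_power_mod[OF assms(2), of l] that by simp
    thus "z ^ l * (\<Sum>x | x \<in> T \<and> h x mod j = l mod j. f x) = G (l mod j)"
      by (simp add: G_def sum_distrib_left)
  qed
  also have "\<dots> = (\<Sum>r<j. G r)"
    by (rule sum.reindex_bij_witness[where i = "\<lambda>r. if r = 0 then j else r" and j = "\<lambda>l. l mod j"])
      (use assms(1) in \<open>auto simp: le_less split: if_splits\<close>)
  also have "\<dots> = (\<Sum>x\<in>T. z ^ h x * f x)"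
    unfolding G_def using assms by (intro sum.group) auto
  finally show ?thesis ..
qed

lemma rho_power_self: "j \<ge> 1 \<Longrightarrow> rho j ^ j = 1"
  by (simp add: rho_def exp_of_nat_mult[symmetric])

section \<open>Uniqueness of the quasi-polynomial representation\<close>

lemma poly_eq_0_if_vanishes_on_progression:
  fixes p :: "'a::{idom,ring_char_0} poly"
  assumes "D > 0" and "\<And>m. poly p (of_nat (D * m + t)) = 0"
  shows "p = 0"
proof (rule ccontr)
  assume "p \<noteq> 0"
  hence "finite {x. poly p x = 0}" by (rule poly_roots_finite)
  moreover have "range (\<lambda>m. of_nat (D * m + t)) \<subseteq> {x. poly p x = 0}" using assms(2) by auto
  ultimately have "finite (range (\<lambda>m. of_nat (D * m + t) :: 'a))" by (rule rev_finite_subset)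
  moreover have "inj (\<lambda>m. of_nat (D * m + t) :: 'a)" using assms(1) by (auto simp: inj_def)
  ultimately show False by (simp add: finite_image_iff)
qed

lemma quasipolynomial_coefficient_eq_0:
  fixes Q :: "complex \<Rightarrow> complex poly"
  assumes "D > 0"
    and vanish: "\<And>n. (\<Sum>z | z ^ D = 1. poly (Q z) (of_nat n) * inverse z ^ n) = 0"
    and "w ^ D = 1"
  shows "Q w = 0"
proof -
  define U where "U = {z::complex. z ^ D = 1}"
  have "finite U" unfolding U_def using assms by (intro finite_roots_unity) auto
  have U_nonzero: "z \<noteq> 0" if "z \<in> U" for z using that assms unfolding U_def by (auto simp: power_0_left)
  (* Along each residue class n = D m + t the hypothesis says that the polynomial S t vanishes;
     a discrete Fourier inversion over t then isolates Q w. *)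
  define S where "S t = (\<Sum>z\<in>U. smult (inverse z ^ t) (Q z))" for t
  have S_eq_0: "S t = 0" for t
  proof (rule poly_eq_0_if_vanishes_on_progression[OF \<open>D > 0\<close>])
    fix m
    have "inverse z ^ (D * m + t) = inverse z ^ t" if "z \<in> U" for z
      using that by (simp add: U_def power_add power_mult power_inverse)
    hence "poly (S t) (of_nat (D * m + t)) =
        (\<Sum>z\<in>U. poly (Q z) (of_nat (D * m + t)) * inverse z ^ (D * m + t))"
      by (simp add: S_def poly_sum mult.commute)
    also have "\<dots> = 0" unfolding U_def by (rule vanish)
    finally show "poly (S t) (of_nat (D * m + t)) = 0" .
  qed
  have geometric: "(\<Sum>t<D. (w * inverse z) ^ t) = (if z = w then of_nat D else 0)" if "z \<in> U" for z
  proof (cases "z = w")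
    case False
    hence "w * inverse z \<noteq> 1" using U_nonzero[OF that] by (simp add: field_simps)
    moreover have "(w * inverse z) ^ D = 1"
      using that \<open>w ^ D = 1\<close> by (simp add: U_def power_mult_distrib power_inverse)
    ultimately show ?thesis using False by (simp add: geometric_sum)
  qed (use U_nonzero that in simp)
  have "of_nat D * poly (Q w) x = 0" for x
  proof -
    have "0 = (\<Sum>t<D. w ^ t * poly (S t) x)" by (simp add: S_eq_0)
    also have "\<dots> = (\<Sum>t<D. \<Sum>z\<in>U. (w * inverse z) ^ t * poly (Q z) x)"
      by (simp add: S_def poly_sum sum_distrib_left power_mult_distrib mult_ac)
    also have "\<dots> = (\<Sum>z\<in>U. (\<Sum>t<D. (w * inverse z) ^ t) * poly (Q z) x)"
      by (subst sum.swap) (simp add: sum_distrib_right)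
    also have "\<dots> = (\<Sum>z\<in>U. (if z = w then of_nat D * poly (Q z) x else 0))"
      by (intro sum.cong refl) (simp add: geometric)
    also have "\<dots> = of_nat D * poly (Q w) x"
      using \<open>finite U\<close> \<open>w ^ D = 1\<close> by (simp add: U_def)
    finally show ?thesis by simp
  qed
  hence "\<forall>x. poly (Q w) x = 0" using assms by simp
  thus ?thesis by (rule poly_all_0_iff_0[THEN iffD1])
qed

lemma sylvester_polys_eqI:
  assumes "D > 0"
    and vanish: "\<forall>z. z ^ D \<noteq> 1 \<longrightarrow> P z = 0"
    and represents: "\<And>n. of_nat (restricted_partition a n) =
      (\<Sum>z | z ^ D = 1. poly (P z) (of_nat n) * inverse z ^ n)"
  shows "sylvester_polys a D = P"
  unfolding sylvester_polys_def
proof (rule the_equality)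
  fix P' :: "complex \<Rightarrow> complex poly"
  assume P': "(\<forall>z. z ^ D \<noteq> 1 \<longrightarrow> P' z = 0) \<and>
    (\<forall>n. of_nat (restricted_partition a n) = (\<Sum>z | z ^ D = 1. poly (P' z) (of_nat n) * inverse z ^ n))"
  show "P' = P"
  proof
    fix w
    show "P' w = P w"
    proof (cases "w ^ D = 1")
      case True
      have "(\<lambda>z. P' z - P z) w = 0"
      proof (rule quasipolynomial_coefficient_eq_0[OF \<open>D > 0\<close> _ True])
        show "(\<Sum>z | z ^ D = 1. poly (P' z - P z) (of_nat n) * inverse z ^ n) = 0" for n
          using P' represents[of n] by (simp add: algebra_simps sum_subtractf)
      qed
      thus ?thesis by simp
    next
      case False
      thus ?thesis using P' vanish by simp
    qed
  qed
qed (use vanish represents in blast)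

section \<open>Counting solutions by residues\<close>

definition weighted_sum :: "nat list \<Rightarrow> nat list \<Rightarrow> nat" where
  "weighted_sum a x = (\<Sum>i<length a. a ! i * x ! i)"

definition residue_tuples :: "nat list \<Rightarrow> nat \<Rightarrow> nat list set" where
  "residue_tuples a D = {js. length js = length a \<and> (\<forall>i<length a. js ! i < D div a ! i)}"

lemma finite_residue_tuples: "finite (residue_tuples a D)"
proof (rule finite_subset)
  show "residue_tuples a D \<subseteq> {js. set js \<subseteq> {..<D} \<and> length js = length a}"
    using div_le_dividend less_le_trans by (fastforce simp: residue_tuples_def in_set_conv_nth)
qed (rule finite_lists_length_eq, simp)

lemma weighted_sum_residue_tuple_less:
  assumes "length a \<ge> 1" and "\<forall>x\<in>set a. x dvd D" and "D > 0" and "js \<in> residue_tuples a D"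
  shows "weighted_sum a js < length a * D"
proof -
  have "a ! i * js ! i < D" if "i < length a" for i
  proof -
    have "a ! i dvd D" "a ! i > 0" using assms that by (auto intro: dvd_pos_nat)
    moreover have "js ! i < D div a ! i" using assms(4) that by (simp add: residue_tuples_def)
    ultimately show ?thesis by (metis dvd_div_mult_self mult.commute mult_less_cancel1)
  qed
  hence "weighted_sum a js < (\<Sum>i<length a. D)"
    unfolding weighted_sum_def using assms(1) by (intro sum_strict_mono) (auto simp: lessThan_empty_iff)
  thus ?thesis by simp
qed

lemma weighted_sum_mixed_radix:
  assumes "\<forall>x\<in>set a. x dvd D" and "length js = length a" and "length q = length a"
  shows "weighted_sum a (map (\<lambda>i. js ! i + D div a ! i * q ! i) [0..<length a]) =
    weighted_sum a js + D * sum_list q"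
proof -
  have "a ! i * (D div a ! i) = D" if "i < length a" for i
    using assms(1) that by simp
  hence "weighted_sum a (map (\<lambda>i. js ! i + D div a ! i * q ! i) [0..<length a]) =
      (\<Sum>i<length a. a ! i * js ! i + D * q ! i)"
    unfolding weighted_sum_def by (intro sum.cong refl) (simp add: algebra_simps)
  also have "\<dots> = weighted_sum a js + D * sum_list q"
    using assms(3) by (simp add: weighted_sum_def sum.distrib sum_distrib_left sum_list_sum_nth atLeast0LessThan)
  finally show ?thesis .
qed

lemma bij_betw_solutions_residue_tuples:
  assumes "\<forall>x\<in>set a. x dvd D" and "D > 0"
  shows "bij_betw
    (\<lambda>x. (map (\<lambda>i. x ! i mod (D div a ! i)) [0..<length a],
          map (\<lambda>i. x ! i div (D div a ! i)) [0..<length a]))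
    {x. length x = length a \<and> weighted_sum a x = n}
    (SIGMA js:residue_tuples a D. {q. length q = length a \<and> weighted_sum a js + D * sum_list q = n})"
    (is "bij_betw ?decompose ?X (Sigma _ ?Q)")
proof -
  define r where "r = length a"
  define d where "d i = D div a ! i" for i
  have d_pos: "\<forall>i<r. d i > 0"
  proof clarify
    fix i assume "i < r"
    hence "a ! i dvd D" using assms(1) by (simp add: r_def)
    thus "d i > 0" using \<open>D > 0\<close> by (metis d_def dvd_div_mult_self gr0I mult_0)
  qed
  define recompose where "recompose = (\<lambda>(js, q). map (\<lambda>i. js ! i + d i * q ! i) [0..<r])"
  have recompose_decompose: "recompose (?decompose x) = x" if "length x = r" for x
    using that unfolding recompose_def d_def r_def by (auto intro: nth_equalityI)
  have weighted_sum_recompose: "weighted_sum a (recompose (js, q)) = weighted_sum a js + D * sum_list q"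
    if "length js = r" "length q = r" for js q
    using weighted_sum_mixed_radix[OF assms(1)] that by (simp add: recompose_def d_def r_def)
  show ?thesis
  proof (rule bij_betw_byWitness[where f' = recompose])
    show "\<forall>x\<in>?X. recompose (?decompose x) = x" by (simp add: r_def recompose_decompose)
    show "\<forall>y\<in>Sigma (residue_tuples a D) ?Q. ?decompose (recompose y) = y"
    proof
      fix y assume "y \<in> Sigma (residue_tuples a D) ?Q"
      then obtain js q where "y = (js, q)" "js \<in> residue_tuples a D" "q \<in> ?Q js" by blast
      moreover from this have "length js = r" "length q = r" "\<forall>i<r. js ! i < d i"
        by (auto simp: residue_tuples_def d_def r_def)
      ultimately show "?decompose (recompose y) = y"
        using d_pos unfolding recompose_def d_def r_def by (auto intro!: nth_equalityI)
    qed
    show "?decompose ` ?X \<subseteq> Sigma (residue_tuples a D) ?Q"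
    proof (rule image_subsetI)
      fix x assume "x \<in> ?X"
      hence "weighted_sum a (fst (?decompose x)) + D * sum_list (snd (?decompose x)) = n"
        using recompose_decompose weighted_sum_recompose[of "fst (?decompose x)" "snd (?decompose x)"]
        by (simp add: r_def)
      thus "?decompose x \<in> Sigma (residue_tuples a D) ?Q"
        using d_pos by (auto simp: residue_tuples_def d_def r_def)
    qed
    show "recompose ` Sigma (residue_tuples a D) ?Q \<subseteq> ?X"
      using weighted_sum_recompose by (auto simp: recompose_def residue_tuples_def r_def)
  qed
qed

lemma finite_shifted_compositions:
  fixes D s n :: nat
  assumes "D > 0"
  shows "finite {q. length q = r \<and> s + D * sum_list q = n}"
proof (rule finite_subset)
  have "y \<le> n" if "s + D * sum_list q = n" "y \<in> set q" for q y
  proof -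
    have "y \<le> sum_list q" using that(2) by (simp add: member_le_sum_list)
    also have "\<dots> \<le> D * sum_list q" using \<open>D > 0\<close> by simp
    also have "\<dots> \<le> n" using that(1) by simp
    finally show ?thesis .
  qed
  thus "{q. length q = r \<and> s + D * sum_list q = n} \<subseteq> {q. set q \<subseteq> {..n} \<and> length q = r}" by auto
qed (rule finite_lists_length_eq, simp)

lemma card_solutions_eq_sum_residue_tuples:
  assumes "\<forall>x\<in>set a. x dvd D" and "D > 0"
  shows "card {x. length x = length a \<and> weighted_sum a x = n} =
    (\<Sum>js\<in>residue_tuples a D. card {q. length q = length a \<and> weighted_sum a js + D * sum_list q = n})"
  using bij_betw_same_card[OF bij_betw_solutions_residue_tuples[OF assms]] assms(2)
  by (simp add: finite_residue_tuples finite_shifted_compositions)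

lemma card_shifted_compositions:
  assumes "D > 0"
  shows "card {q. length q = r \<and> s + D * sum_list q = n} =
    (if s \<le> n \<and> D dvd n - s then (n - s) div D + r - 1 choose ((n - s) div D) else 0)"
proof (cases "s \<le> n \<and> D dvd n - s")
  case True
  then obtain N where "n - s = D * N" by blast
  hence "{q. length q = r \<and> s + D * sum_list q = n} = {q. size q = r \<and> sum_list q = N}"
    using True assms by auto
  thus ?thesis using True \<open>n - s = D * N\<close> assms by (simp add: card_length_sum_list)
next
  case False
  hence "{q. length q = r \<and> s + D * sum_list q = n} = {}" by auto
  thus ?thesis using False by (simp only: card.empty if_False)
qed

section \<open>Binomial coefficients as rising factorials\<close>

definition shifted_rising_poly :: "nat \<Rightarrow> 'a::comm_semiring_1 poly" where
  "shifted_rising_poly r = (\<Prod>i\<in>{1..<r}. [:of_nat i, 1:])"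

lemma poly_shifted_rising_poly: "poly (shifted_rising_poly r) y = pochhammer (y + 1) (r - 1)"
proof (cases r)
  case (Suc m)
  have "poly (shifted_rising_poly r) y = (\<Prod>i\<in>{Suc 0..<Suc m}. of_nat i + y)"
    by (simp add: Suc shifted_rising_poly_def poly_prod del: prod.op_ivl_Suc)
  also have "\<dots> = (\<Prod>i\<in>{0..<m}. of_nat (Suc i) + y)" by (rule prod.shift_bounds_Suc_ivl)
  also have "\<dots> = pochhammer (y + 1) (r - 1)"
    unfolding pochhammer_prod Suc by (intro prod.cong) (simp_all add: algebra_simps)
  finally show ?thesis .
qed (simp add: shifted_rising_poly_def)

lemma coeff_shifted_rising_poly: "coeff (shifted_rising_poly r) k = of_int (stirl r k)"
proof -
  have "coeff (\<Prod>i\<in>A. [:of_nat i, 1:] :: 'a poly) k = of_int (coeff (\<Prod>i\<in>A. [:int i, 1:]) k)" if "finite A" for A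
    using that by (induction A arbitrary: k rule: finite_induct) (auto simp: coeff_pCons split: nat.split)
  thus ?thesis by (simp add: shifted_rising_poly_def stirl_def)
qed

lemma pochhammer_eq_stirl_sum:
  fixes y :: "'a::comm_ring_1"
  shows "pochhammer (y + 1) (r - 1) = (\<Sum>k\<le>r - 1. of_int (stirl r k) * y ^ k)"
proof -
  let ?p = "shifted_rising_poly r :: 'a poly"
  have "degree ?p \<le> sum (degree \<circ> (\<lambda>i::nat. [:of_nat i :: 'a, 1:])) {1..<r}"
    unfolding shifted_rising_poly_def by (rule degree_prod_sum_le) simp
  also have "\<dots> \<le> (\<Sum>i\<in>{1..<r}. 1)" by (intro sum_mono) (simp add: degree_pCons_le)
  finally have "degree ?p \<le> r - 1" by simp
  have "pochhammer (y + 1) (r - 1) = (\<Sum>k\<le>degree ?p. coeff ?p k * y ^ k)"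
    using poly_altdef[of ?p y] by (simp add: poly_shifted_rising_poly)
  also have "\<dots> = (\<Sum>k\<le>r - 1. coeff ?p k * y ^ k)"
    using \<open>degree ?p \<le> r - 1\<close> by (intro sum.mono_neutral_left) (auto simp: coeff_eq_0)
  finally show ?thesis by (simp add: coeff_shifted_rising_poly)
qed

lemma binomial_eq_pochhammer:
  "of_nat (N + k choose N) = (pochhammer (of_nat N + 1) k / fact k :: 'a::field_char_0)"
proof -
  have "of_nat (N + k choose N) = (of_nat (N + k) gchoose k :: 'a)"
    by (simp add: binomial_gbinomial binomial_symmetric[of N "N + k"] flip: binomial_symmetric)
  also have "\<dots> = pochhammer (of_nat N + 1) k / fact k" by (simp add: gbinomial_pochhammer')
  finally show ?thesis .
qed

lemma binomial_count_eq_pochhammer: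
  assumes "r \<ge> 1" and "D > 0" and "s < r * D"
  shows "of_nat (if s \<le> n \<and> D dvd n - s then (n - s) div D + r - 1 choose ((n - s) div D) else 0) =
    (if s mod D = n mod D then pochhammer ((of_nat n - of_nat s) / of_nat D + 1) (r - 1) / fact (r - 1)
     else (0 :: 'a::field_char_0))"
proof (cases "s \<le> n")
  case True
  hence congruent_iff: "s mod D = n mod D \<longleftrightarrow> D dvd n - s" by (metis mod_eq_dvd_iff_nat)
  show ?thesis
  proof (cases "D dvd n - s")
    case True
    then obtain N where N: "n - s = D * N" by blast
    hence "(of_nat n - of_nat s) / of_nat D = (of_nat N :: 'a)"
      using \<open>s \<le> n\<close> \<open>D > 0\<close> by (simp add: field_simps flip: of_nat_diff)
    thus ?thesis
      using True \<open>s \<le> n\<close> N \<open>D > 0\<close> \<open>r \<ge> 1\<close> congruent_iff binomial_eq_pochhammer[of N "r - 1"]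
      by simp
  qed (simp add: congruent_iff)
next
  case False
  show ?thesis
  proof (cases "s mod D = n mod D")
    case True
    then obtain t where t: "s - n = D * t" using False by (metis mod_eq_dvd_iff_nat nat_le_linear dvdE)
    hence "t \<ge> 1" using False by (cases t) auto
    moreover have "D * t < D * r" using t \<open>s < r * D\<close> by (metis diff_le_self le_less_trans mult.commute)
    hence "t < r" using \<open>D > 0\<close> by simp
    moreover have "(of_nat n - of_nat s) / of_nat D + 1 = - (of_nat (t - 1) :: 'a)"
    proof -
      have "of_nat s - of_nat n = (of_nat (D * t) :: 'a)" using t False by (simp flip: of_nat_diff t)
      thus ?thesis using \<open>D > 0\<close> \<open>t \<ge> 1\<close> by (simp add: field_simps)
    qed
    ultimately have "pochhammer ((of_nat n - of_nat s) / of_nat D + 1) (r - 1) = (0 :: 'a)"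
      by (simp only: pochhammer_of_nat_eq_0_iff)
    thus ?thesis using False by simp
  qed (use False in simp)
qed

lemma sum_power_diff_regroup:
  fixes c :: "nat \<Rightarrow> 'a::comm_ring_1"
  shows "(\<Sum>k\<le>K. c k * (d * (x - y)) ^ k) =
    (\<Sum>m=1..Suc K. \<Sum>k=m-1..K. c k * (-1) ^ (k + 1 - m) * of_nat (k choose (m - 1)) *
       (d ^ k * y ^ (k + 1 - m) * x ^ (m - 1)))"
proof -
  define g where "g i k = c k * (-1) ^ (k - i) * of_nat (k choose i) * (d ^ k * y ^ (k - i) * x ^ i)" for i k
  have "(\<Sum>m=1..Suc K. \<Sum>k=m-1..K. c k * (-1) ^ (k + 1 - m) * of_nat (k choose (m - 1)) *
       (d ^ k * y ^ (k + 1 - m) * x ^ (m - 1))) =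
    (\<Sum>i=0..K. \<Sum>k=Suc i-1..K. c k * (-1) ^ (k + 1 - Suc i) * of_nat (k choose (Suc i - 1)) *
       (d ^ k * y ^ (k + 1 - Suc i) * x ^ (Suc i - 1)))"
    by (simp only: One_nat_def sum.shift_bounds_cl_Suc_ivl)
  also have "\<dots> = (\<Sum>i=0..K. \<Sum>k=i..K. g i k)" by (simp add: g_def)
  also have "\<dots> = (\<Sum>i\<le>K. \<Sum>k | k \<in> {..K} \<and> i \<le> k. g i k)"
    by (intro sum.cong) auto
  also have "\<dots> = (\<Sum>k\<le>K. \<Sum>i | i \<in> {..K} \<and> i \<le> k. g i k)"
    by (rule sum.swap_restrict) simp_all
  also have "\<dots> = (\<Sum>k\<le>K. \<Sum>i\<le>k. g i k)"
    by (intro sum.cong refl) auto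
  also have "\<dots> = (\<Sum>k\<le>K. c k * d ^ k * (\<Sum>i\<le>k. of_nat (k choose i) * x ^ i * (- y) ^ (k - i)))"
    by (simp add: g_def sum_distrib_left power_minus' mult_ac)
  also have "\<dots> = (\<Sum>k\<le>K. c k * (d * (x - y)) ^ k)"
    using binomial_ring[of x "- y"] by (simp add: power_mult_distrib mult.assoc)
  finally show ?thesis ..
qed

section \<open>The Sylvester polynomials\<close>

definition sylvester_poly :: "nat list \<Rightarrow> nat \<Rightarrow> complex \<Rightarrow> complex poly" where
  "sylvester_poly a D z = smult (inverse (of_nat D * fact (length a - 1)))
     (\<Sum>js\<in>residue_tuples a D. smult (z ^ weighted_sum a js)
        (pcompose (shifted_rising_poly (length a))
           [:- of_nat (weighted_sum a js) / of_nat D, inverse (of_nat D):]))"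

lemma poly_sylvester_poly:
  "poly (sylvester_poly a D z) x =
    (\<Sum>js\<in>residue_tuples a D. z ^ weighted_sum a js *
       pochhammer ((x - of_nat (weighted_sum a js)) / of_nat D + 1) (length a - 1))
    / (of_nat D * fact (length a - 1))"
  by (simp add: sylvester_poly_def poly_sum poly_pcompose poly_shifted_rising_poly
      divide_inverse algebra_simps)

lemma restricted_partition_eq_quasipolynomial:
  assumes "length a \<ge> 1" and "\<forall>x\<in>set a. x dvd D" and "D > 0"
  shows "of_nat (restricted_partition a n) =
    (\<Sum>z | z ^ D = 1. poly (sylvester_poly a D z) (of_nat n) * inverse z ^ n)"
proof -
  let ?T = "residue_tuples a D" and ?s = "weighted_sum a" and ?r = "length a"
  define F where "F js = pochhammer ((of_nat n - of_nat (?s js)) / of_nat D + 1) (?r - 1) /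
    (of_nat D * fact (?r - 1) :: complex)" for js
  have "restricted_partition a n = card {x. length x = ?r \<and> ?s x = n}"
    by (simp add: restricted_partition_def weighted_sum_def)
  also have "\<dots> = (\<Sum>js\<in>?T. card {q. length q = ?r \<and> ?s js + D * sum_list q = n})"
    using assms(2,3) by (rule card_solutions_eq_sum_residue_tuples)
  finally have "(of_nat (restricted_partition a n) :: complex) =
      (\<Sum>js\<in>?T. of_nat (card {q. length q = ?r \<and> ?s js + D * sum_list q = n}))"
    by simp
  also have "\<dots> = (\<Sum>js\<in>?T. \<Sum>z | z ^ D = 1. z ^ ?s js * inverse z ^ n * F js)"
  proof (intro sum.cong refl)
    fix js assume "js \<in> ?T"
    hence "?s js < ?r * D" using assms by (intro weighted_sum_residue_tuple_less)
    hence "of_nat (card {q. length q = ?r \<and> ?s js + D * sum_list q = n}) =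
        (if ?s js mod D = n mod D then of_nat D * F js else 0)"
      using assms by (simp add: card_shifted_compositions binomial_count_eq_pochhammer F_def)
    also have "\<dots> = (\<Sum>z | z ^ D = 1. z ^ ?s js * inverse z ^ n) * F js"
      using assms by (simp add: sum_roots_of_unity_power_inverse_power)
    finally show "of_nat (card {q. length q = ?r \<and> ?s js + D * sum_list q = n}) =
        (\<Sum>z | z ^ D = 1. z ^ ?s js * inverse z ^ n * F js)"
      by (simp add: sum_distrib_right)
  qed
  also have "\<dots> = (\<Sum>z | z ^ D = 1. (\<Sum>js\<in>?T. z ^ ?s js * F js) * inverse z ^ n)"
    by (subst sum.swap) (simp add: sum_distrib_left sum_distrib_right mult_ac)
  also have "\<dots> = (\<Sum>z | z ^ D = 1. poly (sylvester_poly a D z) (of_nat n) * inverse z ^ n)"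
    by (simp add: poly_sylvester_poly F_def sum_divide_distrib)
  finally show ?thesis .
qed

lemma sylvester_polys_eq:
  assumes "length a \<ge> 1" and "\<forall>x\<in>set a. x dvd D" and "D > 0"
  shows "sylvester_polys a D = (\<lambda>z. if z ^ D = 1 then sylvester_poly a D z else 0)"
  using \<open>D > 0\<close>
proof (rule sylvester_polys_eqI)
  show "of_nat (restricted_partition a n) =
      (\<Sum>z | z ^ D = 1. poly (if z ^ D = 1 then sylvester_poly a D z else 0) (of_nat n) * inverse z ^ n)"
    for n
    unfolding restricted_partition_eq_quasipolynomial[OF assms] by (intro sum.cong) auto
qed simp

lemma wave_tuples_eq: "wave_tuples a D j l = {js \<in> residue_tuples a D. weighted_sum a js mod j = l mod j}"
  by (auto simp: wave_tuples_def residue_tuples_def weighted_sum_def)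

lemma poly_sylvester_poly_expansion:
  assumes "length a \<ge> 1" and "j \<ge> 1" and "z ^ j = 1"
  shows "poly (sylvester_poly a D z) (of_nat n) = inverse (of_nat D * fact (length a - 1)) *
    (\<Sum>m=1..length a. \<Sum>l=1..j. z ^ l *
      (\<Sum>k=m-1..length a - 1. of_int (stirl (length a) k) * (-1) ^ (k + 1 - m) *
         of_nat (k choose (m - 1)) *
         (\<Sum>js\<in>wave_tuples a D j l.
            inverse (of_nat D) ^ k * of_nat (\<Sum>i<length a. a ! i * js ! i) ^ (k + 1 - m) *
            of_nat n ^ (m - 1))))"
proof -
  let ?r = "length a" and ?s = "weighted_sum a" and ?T = "residue_tuples a D"
  define G where "G m js = (\<Sum>k=m-1..?r-1. of_int (stirl ?r k) * (-1) ^ (k + 1 - m) *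
    of_nat (k choose (m - 1)) * (inverse (of_nat D) ^ k * of_nat (?s js) ^ (k + 1 - m) *
    of_nat n ^ (m - 1)) :: complex)" for m js
  have pochhammer_eq: "pochhammer ((of_nat n - of_nat (?s js)) / of_nat D + 1) (?r - 1) = (\<Sum>m=1..?r. G m js)"
    for js
  proof -
    have "pochhammer ((of_nat n - of_nat (?s js)) / of_nat D + 1 :: complex) (?r - 1) =
        (\<Sum>k\<le>?r - 1. of_int (stirl ?r k) * (inverse (of_nat D) * (of_nat n - of_nat (?s js))) ^ k)"
      by (subst pochhammer_eq_stirl_sum) (simp add: divide_inverse mult.commute)
    also have "\<dots> = (\<Sum>m=1..Suc (?r - 1). G m js)"
      unfolding G_def by (rule sum_power_diff_regroup)
    also have "Suc (?r - 1) = ?r" using assms(1) by simp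
    finally show ?thesis .
  qed
  have wave_sum: "(\<Sum>js\<in>wave_tuples a D j l. G m js) =
      (\<Sum>k=m-1..?r-1. of_int (stirl ?r k) * (-1) ^ (k + 1 - m) * of_nat (k choose (m - 1)) *
        (\<Sum>js\<in>wave_tuples a D j l. inverse (of_nat D) ^ k *
           of_nat (\<Sum>i<?r. a ! i * js ! i) ^ (k + 1 - m) * of_nat n ^ (m - 1)))" for m l
    unfolding G_def weighted_sum_def by (subst sum.swap) (simp add: sum_distrib_left)
  have "poly (sylvester_poly a D z) (of_nat n) =
      (\<Sum>js\<in>?T. z ^ ?s js * (\<Sum>m=1..?r. G m js)) / (of_nat D * fact (?r - 1))"
    by (simp only: poly_sylvester_poly pochhammer_eq)
  also have "(\<Sum>js\<in>?T. z ^ ?s js * (\<Sum>m=1..?r. G m js)) = (\<Sum>m=1..?r. \<Sum>js\<in>?T. z ^ ?s js * G m js)"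
    by (subst sum.swap) (simp add: sum_distrib_left)
  also have "\<dots> = (\<Sum>m=1..?r. \<Sum>l=1..j. z ^ l * (\<Sum>js\<in>wave_tuples a D j l. G m js))"
    unfolding wave_tuples_eq using assms(2,3) finite_residue_tuples
    by (intro sum.cong refl sum_power_root_of_unity_by_residue) simp_all
  finally show ?thesis by (simp add: wave_sum divide_inverse mult.commute)
qed

theorem proposition4p2:
  fixes a :: "nat list" and D j n :: nat
  assumes "length a \<ge> 1"
    and "\<forall>x\<in>set a. x > 0"
    and "D > 0" and "\<forall>x\<in>set a. x dvd D"
    and "j \<ge> 1" and "\<exists>x\<in>set a. j dvd x"
  shows "sylvester_wave a D j n =
    inverse (rho j) ^ n / (of_nat D * fact (length a - 1)) *
    (\<Sum>m=1..length a. \<Sum>l=1..j. rho j ^ l *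
      (\<Sum>k=m-1..length a - 1. of_int (stirl (length a) k) * (-1) ^ (k + 1 - m) *
         of_nat (k choose (m - 1)) *
         (\<Sum>js\<in>wave_tuples a D j l.
            inverse (of_nat D) ^ k * of_nat (\<Sum>i<length a. a ! i * js ! i) ^ (k + 1 - m) *
            of_nat n ^ (m - 1))))"
proof -
  have "rho j ^ j = 1" using \<open>j \<ge> 1\<close> by (rule rho_power_self)
  moreover obtain t where "D = j * t" using assms(4,6) by (meson dvd_trans dvdE)
  ultimately have "rho j ^ D = 1" by (simp add: power_mult)
  hence "sylvester_wave a D j n = poly (sylvester_poly a D (rho j)) (of_nat n) * inverse (rho j) ^ n"
    using assms by (simp add: sylvester_wave_def sylvester_polys_eq)
  thus ?thesis
    using assms(1,5) \<open>rho j ^ j = 1\<close> by (simp add: poly_sylvester_poly_expansion divide_inverse mult_ac)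
qed

end
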